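(* Let $n\geq 2$, let $X\subset\mathbb{R}^n$ be finite, equipped with the Euclidean metric $d$, let $k\in\mathbb{N}$ and $\epsilon>0$, and let $S\in\mathcal{Q}(\epsilon)$. If $|S^1_X|>k$, then $S_X\subset\mathcal{C}(\epsilon)$. If $|S^{\mathfrak{m}}_X|\leq k$ or $S_X=\emptyset$, then $S_X\subset\mathcal{N}(\epsilon)$.
   Context: $\mathcal{Q}(\epsilon)$ is the collection of closed cubes $\{(x_1,\dots,x_n)\in\mathbb{R}^n: j_i\frac{\epsilon}{2\sqrt n}\le x_i\le (j_i+1)\frac{\epsilon}{2\sqrt n},\ i=1,\dots,n\}$ for $j\in\mathbb{Z}^n$. For a cube $S\in\mathcal{Q}(\epsilon)$ and an integer $m\geq 0$, $S^m=\{x\in\mathbb{R}^n:\max_i|x_i-s_i|\le m\frac{\epsilon}{2\sqrt n}\text{ for some } s\in S\}$. For $Y,A\subset\mathbb{R}^n$, $Y_A=Y\cap A$; thus $S_X=S\cap X$, $S^m_X=S^m\cap X$. $\mathfrak{m}$ is the smallest integer with $\mathfrak{m}\geq 2\sqrt n$. The set of core points is $\mathcal{C}(\epsilon)=\{p\in X: |\{q\in X: d(p,q)\le\epsilon\}|>k\}$ and the set of noise points is $\mathcal{N}(\epsilon)=X\setminus\mathcal{C}(\epsilon)$. *)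

theory Defs
  imports "HOL-Analysis.Analysis"
begin

text \<open>Points of R^n are represented as vectors of type real^'n, with n = CARD('n).
  The distance dist on real^'n is the Euclidean metric.\<close>

definition cube_side :: "real \<Rightarrow> nat \<Rightarrow> real" where
  "cube_side eps n = eps / (2 * sqrt (real n))"

definition grid_cube :: "real \<Rightarrow> int ^ 'n \<Rightarrow> (real ^ 'n) set" where
  "grid_cube eps j = {x. \<forall>i. real_of_int (j $ i) * cube_side eps CARD('n) \<le> x $ i
                          \<and> x $ i \<le> (real_of_int (j $ i) + 1) * cube_side eps CARD('n)}"

definition grid_cubes :: "real \<Rightarrow> (real ^ 'n) set set" where
  "grid_cubes eps = range (grid_cube eps)"

definition cube_nbhd :: "real \<Rightarrow> nat \<Rightarrow> (real ^ 'n) set \<Rightarrow> (real ^ 'n) set" where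
  "cube_nbhd eps m S = {x. \<exists>s\<in>S. \<forall>i. \<bar>x $ i - s $ i\<bar> \<le> real m * cube_side eps CARD('n)}"

definition frak_m :: "nat \<Rightarrow> nat" where
  "frak_m n = (LEAST m::nat. real m \<ge> 2 * sqrt (real n))"

definition core_points :: "(real ^ 'n) set \<Rightarrow> nat \<Rightarrow> real \<Rightarrow> (real ^ 'n) set" where
  "core_points X k eps = {p \<in> X. card {q \<in> X. dist p q \<le> eps} > k}"

definition noise_points :: "(real ^ 'n) set \<Rightarrow> nat \<Rightarrow> real \<Rightarrow> (real ^ 'n) set" where
  "noise_points X k eps = X - core_points X k eps"

end

theory Submission
  imports Defs
begin

text \<open>Grid cubes have side \<open>c = \<epsilon> / (2 sqrt n)\<close>, so a point of \<open>S\<close> and a point of \<open>S\<^sup>1\<close>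
  differ by at most \<open>2c\<close> in every coordinate and lie at Euclidean distance at most
  \<open>2c sqrt n = \<epsilon>\<close>: every \<open>p \<in> S\<^sub>X\<close> has all of \<open>S\<^sup>1\<^sub>X\<close> in its \<open>\<epsilon>\<close>-ball.
  Conversely a point within distance \<open>\<epsilon> = 2c sqrt n \<le> m c\<close> of \<open>p\<close>, where \<open>m = frak_m n\<close>,
  differs from \<open>p\<close> by at most \<open>m c\<close> in every coordinate, so the \<open>\<epsilon>\<close>-ball of \<open>p\<close> meets \<open>X\<close>
  only inside \<open>S\<^sup>m\<^sub>X\<close>. Both claims follow by comparing cardinalities.\<close>

lemma norm_le_sqrt_card_mult_bound:
  fixes x :: "real ^ 'n"
  assumes "\<And>i. \<bar>x $ i\<bar> \<le> b"
  shows "norm x \<le> sqrt (real CARD('n)) * b"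
proof -
  have "norm x = L2_set (\<lambda>i. norm (x $ i)) UNIV"
    by (simp add: norm_vec_def)
  also have "\<dots> \<le> L2_set (\<lambda>i. b) (UNIV :: 'n set)"
    using assms by (intro L2_set_mono) auto
  also have "\<dots> = sqrt (real CARD('n)) * b"
    using assms[of undefined] by (simp add: L2_set_constant)
  finally show ?thesis .
qed

lemma sqrt_card_mult_cube_side: "sqrt (real n) * (2 * cube_side eps n) = eps" if "n > 0"
  using that by (simp add: cube_side_def)

lemma frak_m_ge: "2 * sqrt (real n) \<le> real (frak_m n)"
proof -
  obtain m :: nat where "2 * sqrt (real n) \<le> real m"
    using real_arch_simple by blast
  then show ?thesis
    unfolding frak_m_def by (rule LeastI)
qed

lemma grid_cube_component_diff:
  fixes j :: "int ^ 'n"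
  assumes "p \<in> grid_cube eps j" and "s \<in> grid_cube eps j"
  shows "\<bar>p $ i - s $ i\<bar> \<le> cube_side eps CARD('n)"
proof -
  let ?c = "cube_side eps CARD('n)"
  have "real_of_int (j $ i) * ?c \<le> p $ i" "p $ i \<le> real_of_int (j $ i) * ?c + ?c"
    "real_of_int (j $ i) * ?c \<le> s $ i" "s $ i \<le> real_of_int (j $ i) * ?c + ?c"
    using assms by (auto simp: grid_cube_def algebra_simps)
  then show ?thesis
    by linarith
qed

lemma cube_nbhd_1_subset_cball:
  fixes S :: "(real ^ 'n) set"
  assumes "S \<in> grid_cubes eps" and "p \<in> S"
  shows "cube_nbhd eps 1 S \<subseteq> cball p eps"
proof
  fix q
  assume "q \<in> cube_nbhd eps 1 S"
  then obtain s where "s \<in> S" and qs: "\<And>i. \<bar>q $ i - s $ i\<bar> \<le> cube_side eps CARD('n)"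
    by (auto simp: cube_nbhd_def)
  obtain j where "S = grid_cube eps j"
    using assms(1) by (auto simp: grid_cubes_def)
  with \<open>p \<in> S\<close> \<open>s \<in> S\<close> have ps: "\<bar>p $ i - s $ i\<bar> \<le> cube_side eps CARD('n)" for i
    by (simp add: grid_cube_component_diff)
  have "\<bar>(p - q) $ i\<bar> \<le> 2 * cube_side eps CARD('n)" for i
    using ps[of i] qs[of i] by simp
  then have "norm (p - q) \<le> sqrt (real CARD('n)) * (2 * cube_side eps CARD('n))"
    by (rule norm_le_sqrt_card_mult_bound)
  then show "q \<in> cball p eps"
    by (simp add: dist_norm sqrt_card_mult_cube_side)
qed

lemma cball_subset_cube_nbhd:
  fixes p :: "real ^ 'n"
  assumes "eps \<ge> 0" and "p \<in> S" and "2 * sqrt (real CARD('n)) \<le> real m"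
  shows "cball p eps \<subseteq> cube_nbhd eps m S"
proof
  fix q
  assume "q \<in> cball p eps"
  have "\<bar>q $ i - p $ i\<bar> \<le> real m * cube_side eps CARD('n)" for i
  proof -
    have "\<bar>q $ i - p $ i\<bar> \<le> norm (q - p)"
      using component_le_norm_cart[of "q - p" i] by simp
    also have "\<dots> \<le> eps"
      using \<open>q \<in> cball p eps\<close> by (simp add: dist_norm norm_minus_commute)
    also have "\<dots> = 2 * sqrt (real CARD('n)) * cube_side eps CARD('n)"
      using sqrt_card_mult_cube_side[of "CARD('n)" eps] by simp
    also have "\<dots> \<le> real m * cube_side eps CARD('n)"
      using assms(1,3) by (intro mult_right_mono) (auto simp: cube_side_def)
    finally show ?thesis .
  qed
  with \<open>p \<in> S\<close> show "q \<in> cube_nbhd eps m S"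
    by (auto simp: cube_nbhd_def)
qed

lemma core_points_iff_card_cball:
  "p \<in> core_points X k eps \<longleftrightarrow> p \<in> X \<and> k < card (cball p eps \<inter> X)"
proof -
  have "{q \<in> X. dist p q \<le> eps} = cball p eps \<inter> X"
    by auto
  then show ?thesis
    by (simp add: core_points_def)
qed

theorem mainTheorem1:
  fixes X :: "(real ^ 'n) set" and k :: nat and eps :: real and S :: "(real ^ 'n) set"
  assumes "CARD('n) \<ge> 2"
    and "finite X"
    and "eps > 0"
    and "S \<in> grid_cubes eps"
  shows "(card (cube_nbhd eps 1 S \<inter> X) > k \<longrightarrow> S \<inter> X \<subseteq> core_points X k eps)
    \<and> ((card (cube_nbhd eps (frak_m CARD('n)) S \<inter> X) \<le> k \<or> S \<inter> X = {})
         \<longrightarrow> S \<inter> X \<subseteq> noise_points X k eps)"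
proof (intro conjI impI subsetI)
  fix p
  assume p: "p \<in> S \<inter> X" and "k < card (cube_nbhd eps 1 S \<inter> X)"
  moreover have "card (cube_nbhd eps 1 S \<inter> X) \<le> card (cball p eps \<inter> X)"
    using cube_nbhd_1_subset_cball[OF assms(4)] p assms(2)
    by (intro card_mono) auto
  ultimately show "p \<in> core_points X k eps"
    by (simp add: core_points_iff_card_cball)
next
  fix p
  assume p: "p \<in> S \<inter> X"
    and "card (cube_nbhd eps (frak_m CARD('n)) S \<inter> X) \<le> k \<or> S \<inter> X = {}"
  then have "card (cube_nbhd eps (frak_m CARD('n)) S \<inter> X) \<le> k"
    by blast
  moreover have "cball p eps \<subseteq> cube_nbhd eps (frak_m CARD('n)) S"
    using assms(3) p frak_m_ge by (intro cball_subset_cube_nbhd) auto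
  then have "card (cball p eps \<inter> X) \<le> card (cube_nbhd eps (frak_m CARD('n)) S \<inter> X)"
    using assms(2) by (intro card_mono) auto
  ultimately show "p \<in> noise_points X k eps"
    using p by (simp add: noise_points_def core_points_iff_card_cball)
qed

end
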